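(* Let $I\subseteq\mathbb{R}$ be an open interval (possibly unbounded), $\Sigma=I\times\mathbb{R}$, and let $F=(P,Q)\in C^1(\Sigma,\mathbb{R}^2)$ be non-singular. If every level set $\{(x,y)\in\Sigma: P(x,y)=c\}$, $c\in\mathbb{R}$, is connected (or every level set $\{(x,y)\in\Sigma: Q(x,y)=c\}$, $c\in\mathbb{R}$, is connected), then $F$ is injective.
   Context: $F$ is non-singular if its Jacobian determinant $d_F=P_xQ_y-P_yQ_x$ is nonzero at every point of $\Sigma$. *)

theory Defs
  imports "HOL-Analysis.Analysis"
begin

definition strip :: "real set \<Rightarrow> (real \<times> real) set" where
  "strip I = I \<times> (UNIV :: real set)"

definition C1_on :: "(real \<times> real) set \<Rightarrow> (real \<times> real \<Rightarrow> real)
    \<Rightarrow> (real \<times> real \<Rightarrow> real \<times> real \<Rightarrow> real) \<Rightarrow> bool" where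
  "C1_on S f f' \<longleftrightarrow>
     (\<forall>z\<in>S. (f has_derivative f' z) (at z)) \<and>
     continuous_on S (\<lambda>z. f' z (1, 0)) \<and>
     continuous_on S (\<lambda>z. f' z (0, 1))"

definition jac_det :: "(real \<times> real \<Rightarrow> real \<times> real \<Rightarrow> real)
    \<Rightarrow> (real \<times> real \<Rightarrow> real \<times> real \<Rightarrow> real) \<Rightarrow> real \<times> real \<Rightarrow> real" where
  "jac_det P' Q' z = P' z (1, 0) * Q' z (0, 1) - P' z (0, 1) * Q' z (1, 0)"

end

theory Submission
  imports Defs
begin

text \<open>Fix a level set \<open>L = {P = c}\<close>. By the inverse function theorem \<open>F = (P, Q)\<close> is a local
  homeomorphism, so near each of its points \<open>L\<close> is the image of a continuous section
  \<open>t \<mapsto> F\<^sup>-\<^sup>1(c, t)\<close> of \<open>Q\<close> over an interval, and \<open>Q\<close> is locally injective on \<open>L\<close>.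
  Two continuous sections that agree at one point of a connected set agree on all of it, so
  such local sections can be glued: any two points \<open>x, y\<close> of the connected set \<open>L\<close> are joined
  by a continuous section of \<open>Q\<close> over the segment between \<open>Q x\<close> and \<open>Q y\<close>. If \<open>Q x = Q y\<close>
  that segment is a point, hence \<open>x = y\<close>.\<close>

definition continuous_section_on ::
    "real set \<Rightarrow> ('a::topological_space \<Rightarrow> real) \<Rightarrow> 'a set \<Rightarrow> (real \<Rightarrow> 'a) \<Rightarrow> bool" where
  "continuous_section_on S q X g \<longleftrightarrow> continuous_on S g \<and> (\<forall>t\<in>S. g t \<in> X \<and> q (g t) = t)"

lemma continuous_section_on_subset:
  "continuous_section_on S q X g \<Longrightarrow> T \<subseteq> S \<Longrightarrow> continuous_section_on T q X g"
  unfolding continuous_section_on_def by (meson continuous_on_subset subsetD)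

lemma continuous_sections_eq:
  fixes q :: "'a::metric_space \<Rightarrow> real"
  assumes "connected S" and g: "continuous_section_on S q X g" and h: "continuous_section_on S q X h"
    and inj: "\<And>x. x \<in> X \<Longrightarrow> \<exists>V. open V \<and> x \<in> V \<and> inj_on q (V \<inter> X)"
    and "s \<in> S" "g s = h s" "t \<in> S"
  shows "g t = h t"
proof -
  define E where "E = {t \<in> S. dist (g t) (h t) = 0}"
  have "closedin (top_of_set S) E"
    unfolding E_def using g h unfolding continuous_section_on_def
    by (intro continuous_closedin_preimage_constant continuous_on_dist) auto
  moreover have "openin (top_of_set S) E"
    unfolding openin_subopen[of _ E]
  proof
    fix r assume "r \<in> E"
    then have r: "r \<in> S" "g r = h r" by (auto simp: E_def)
    with g inj obtain V where V: "open V" "g r \<in> V" "inj_on q (V \<inter> X)"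
      unfolding continuous_section_on_def by blast
    let ?T = "(S \<inter> g -` V) \<inter> (S \<inter> h -` V)"
    have "openin (top_of_set S) ?T"
      using g h V(1) unfolding continuous_section_on_def
      by (intro openin_Int continuous_openin_preimage_gen) auto
    moreover have "?T \<subseteq> E"
      using g h V(3) unfolding continuous_section_on_def inj_on_def E_def by auto
    ultimately show "\<exists>T. openin (top_of_set S) T \<and> r \<in> T \<and> T \<subseteq> E"
      using r V(2) by auto
  qed
  moreover have "s \<in> E" using assms by (simp add: E_def)
  ultimately have "E = S"
    using \<open>connected S\<close> unfolding connected_clopen E_def by blast
  then show ?thesis using \<open>t \<in> S\<close> by (auto simp: E_def)
qed

lemma continuous_section_on_Un:
  assumes "closed S" "closed T"
    and g: "continuous_section_on S q X g" and h: "continuous_section_on T q X h"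
    and "\<And>t. t \<in> S \<inter> T \<Longrightarrow> g t = h t"
  shows "continuous_section_on (S \<union> T) q X (\<lambda>t. if t \<in> S then g t else h t)"
proof -
  have "continuous_on (S \<union> T) (\<lambda>t. if t \<in> S then g t else h t)"
    using assms unfolding continuous_section_on_def
    by (intro continuous_on_closed_Un) (auto intro: continuous_on_eq)
  then show ?thesis
    using g h unfolding continuous_section_on_def by auto
qed

lemma inj_on_if_local_sections:
  fixes q :: "'a::metric_space \<Rightarrow> real"
  assumes "connected X"
    and sec: "\<And>x. x \<in> X \<Longrightarrow> \<exists>e>0. \<exists>h V. continuous_section_on (ball (q x) e) q X h \<and>
                 open V \<and> x \<in> V \<and> V \<inter> X \<subseteq> h ` ball (q x) e"
  shows "inj_on q X"
proof (rule inj_onI)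
  fix a b assume "a \<in> X" "b \<in> X" "q a = q b"
  have inj: "\<exists>V. open V \<and> x \<in> V \<and> inj_on q (V \<inter> X)" if "x \<in> X" for x
  proof -
    from sec[OF that] obtain e h V where "continuous_section_on (ball (q x) e) q X h"
      "open V" "x \<in> V" "V \<inter> X \<subseteq> h ` ball (q x) e" by blast
    then have "inj_on q (V \<inter> X)"
      unfolding continuous_section_on_def inj_on_def by (metis subsetD imageE)
    with \<open>open V\<close> \<open>x \<in> V\<close> show ?thesis by blast
  qed
  define R where "R x y \<longleftrightarrow>
    (\<exists>g. continuous_section_on (closed_segment (q x) (q y)) q X g \<and> g (q x) = x \<and> g (q y) = y)" for x y
  have "R a b"
    using \<open>connected X\<close> \<open>a \<in> X\<close> \<open>b \<in> X\<close>
  proof (rule connected_equivalence_relation)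
    show "R y x" if "R x y" for x y
      using that unfolding R_def by (metis closed_segment_commute)
  next
    fix x y z assume "R x y" "R y z"
    then obtain g h where
      g: "continuous_section_on (closed_segment (q x) (q y)) q X g" "g (q x) = x" "g (q y) = y" and
      h: "continuous_section_on (closed_segment (q y) (q z)) q X h" "h (q y) = y" "h (q z) = z"
      unfolding R_def by blast
    let ?S = "closed_segment (q x) (q y)" and ?T = "closed_segment (q y) (q z)"
    define k where "k t = (if t \<in> ?S then g t else h t)" for t
    have agree: "g t = h t" if "t \<in> ?S \<inter> ?T" for t
    proof (rule continuous_sections_eq[OF _ _ _ inj _ _ that])
      show "connected (?S \<inter> ?T)"
        by (intro convex_connected convex_Int convex_closed_segment)
    qed (use g h in \<open>auto intro: continuous_section_on_subset\<close>)
    have "continuous_section_on (?S \<union> ?T) q X k"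
      unfolding k_def using g(1) h(1) agree by (intro continuous_section_on_Un) auto
    moreover have "closed_segment (q x) (q z) \<subseteq> ?S \<union> ?T"
      by (auto simp: closed_segment_eq_real_ivl split: if_splits)
    moreover have "k (q x) = x" "k (q z) = z"
      using g h agree by (auto simp: k_def)
    ultimately show "R x z"
      unfolding R_def by (blast intro: continuous_section_on_subset)
  next
    fix x assume "x \<in> X"
    then obtain e h V where h: "continuous_section_on (ball (q x) e) q X h"
      and V: "open V" "x \<in> V" "V \<inter> X \<subseteq> h ` ball (q x) e"
      using sec by blast
    have hq: "h (q y) = y" if "y \<in> V \<inter> X" for y
      using V(3) h that unfolding continuous_section_on_def by fastforce
    have "R x y" if "y \<in> V \<inter> X" for y
    proof -
      have "q y \<in> ball (q x) e"
        using V(3) h that unfolding continuous_section_on_def by fastforce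
      moreover from this have "q x \<in> ball (q x) e"
        by (auto intro: le_less_trans[OF zero_le_dist])
      ultimately have "closed_segment (q x) (q y) \<subseteq> ball (q x) e"
        by (intro closed_segment_subset convex_ball)
      then show ?thesis
        unfolding R_def using h hq that \<open>x \<in> X\<close> V(2)
        by (auto intro: continuous_section_on_subset)
    qed
    moreover have "openin (top_of_set X) (V \<inter> X)"
      using openin_open_Int[OF V(1), of X] by (simp add: Int_commute)
    ultimately show "\<exists>T. openin (top_of_set X) T \<and> x \<in> T \<and> (\<forall>y\<in>T. R x y)"
      using V(2) \<open>x \<in> X\<close> by blast
  qed
  then show "a = b"
    unfolding R_def using \<open>q a = q b\<close> by auto
qed

lemma linear_real_pair_expand:
  fixes f :: "real \<times> real \<Rightarrow> real"
  assumes "linear f"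
  shows "f (u, w) = u * f (1, 0) + w * f (0, 1)"
proof -
  have "(u, w) = u *\<^sub>R (1, 0) + w *\<^sub>R (0, 1)" by simp
  then have "f (u, w) = f (u *\<^sub>R (1, 0) + w *\<^sub>R (0, 1))" by simp
  also have "\<dots> = u * f (1, 0) + w * f (0, 1)"
    by (simp only: linear_add[OF assms] linear_scale[OF assms] real_scaleR_def)
  finally show ?thesis .
qed

lemma inj_Pair_if_det_nonzero:
  fixes f g :: "real \<times> real \<Rightarrow> real"
  assumes f: "bounded_linear f" and g: "bounded_linear g"
    and det: "f (1, 0) * g (0, 1) - f (0, 1) * g (1, 0) \<noteq> 0"
  shows "inj (\<lambda>v. (f v, g v))"
proof -
  have lin: "linear (\<lambda>v. (f v, g v))"
    using f g by (intro bounded_linear.linear bounded_linear_Pair)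
  show ?thesis
    unfolding linear_injective_0[OF lin]
  proof (intro allI impI)
    fix v :: "real \<times> real" assume "(f v, g v) = 0"
    obtain u w where v: "v = (u, w)" by fastforce
    let ?d = "f (1, 0) * g (0, 1) - f (0, 1) * g (1, 0)"
    have fv: "u * f (1, 0) + w * f (0, 1) = 0" and gv: "u * g (1, 0) + w * g (0, 1) = 0"
      using \<open>(f v, g v) = 0\<close> linear_real_pair_expand[OF bounded_linear.linear[OF f], of u w]
        linear_real_pair_expand[OF bounded_linear.linear[OF g], of u w]
      by (simp_all add: v zero_prod_def)
    have "u * ?d = g (0, 1) * (u * f (1, 0) + w * f (0, 1)) - f (0, 1) * (u * g (1, 0) + w * g (0, 1))"
     and "w * ?d = f (1, 0) * (u * g (1, 0) + w * g (0, 1)) - g (1, 0) * (u * f (1, 0) + w * f (0, 1))"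
      by (simp_all add: algebra_simps)
    then have "u * ?d = 0" "w * ?d = 0"
      unfolding fv gv by simp_all
    then show "v = 0"
      using det by (simp add: v zero_prod_def)
  qed
qed

lemma inverse_function_theorem_inj:
  fixes f :: "'a::euclidean_space \<Rightarrow> 'a" and f' :: "'a \<Rightarrow> 'a \<Rightarrow>\<^sub>L 'a"
  assumes U: "open U" and derf: "\<And>x. x \<in> U \<Longrightarrow> (f has_derivative blinfun_apply (f' x)) (at x)"
    and contf: "continuous_on U f'" and x0: "x0 \<in> U" and inj: "inj (blinfun_apply (f' x0))"
  obtains U' V g where "open U'" "U' \<subseteq> U" "x0 \<in> U'" "open V" "f x0 \<in> V"
    "homeomorphism U' V f g"
proof -
  obtain g where g: "linear g" "g \<circ> blinfun_apply (f' x0) = id"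
    using linear_injective_left_inverse[OF bounded_linear.linear[OF blinfun.bounded_linear_right] inj]
    by blast
  have "bounded_linear g"
    using g(1) by (simp add: linear_conv_bounded_linear)
  then have inv: "Blinfun g o\<^sub>L f' x0 = id_blinfun"
    using g(2) by (intro blinfun_eqI) (simp add: bounded_linear_Blinfun_apply pointfree_idE)
  show ?thesis
  proof (rule inverse_function_theorem[OF U derf contf x0 inv])
    fix U' V h
    assume "open U'" "U' \<subseteq> U" "x0 \<in> U'" "open V" "f x0 \<in> V" "homeomorphism U' V f h"
    then show ?thesis by (rule that)
  qed
qed

lemma C1_on_Pair_local_homeomorphism:
  fixes P Q :: "real \<times> real \<Rightarrow> real"
  assumes U: "open U" and P: "C1_on U P P'" and Q: "C1_on U Q Q'"
    and x0: "x0 \<in> U" and det: "jac_det P' Q' x0 \<noteq> 0"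
  obtains U' V g where "open U'" "U' \<subseteq> U" "x0 \<in> U'" "open V" "(P x0, Q x0) \<in> V"
    "homeomorphism U' V (\<lambda>z. (P z, Q z)) g"
proof -
  define F' where "F' z = Blinfun (\<lambda>v. (P' z v, Q' z v))" for z
  have lin: "bounded_linear (P' z)" "bounded_linear (Q' z)" if "z \<in> U" for z
    using P Q that unfolding C1_on_def by (auto intro: has_derivative_bounded_linear)
  have F': "blinfun_apply (F' z) = (\<lambda>v. (P' z v, Q' z v))" if "z \<in> U" for z
    unfolding F'_def using lin[OF that] by (intro bounded_linear_Blinfun_apply bounded_linear_Pair)
  have der: "((\<lambda>z. (P z, Q z)) has_derivative blinfun_apply (F' z)) (at z)" if "z \<in> U" for z
    using P Q that unfolding F'[OF that] C1_on_def by (intro has_derivative_Pair) auto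
  have "continuous_on U (\<lambda>z. F' z i)" if "i \<in> Basis" for i
  proof -
    have "continuous_on U (\<lambda>z. (P' z i, Q' z i))"
      using P Q that unfolding C1_on_def by (auto simp: Basis_prod_def intro: continuous_on_Pair)
    then show ?thesis
      by (rule continuous_on_eq) (simp add: F')
  qed
  then have cont: "continuous_on U F'"
    unfolding continuous_on_eq_continuous_within by (blast intro: continuous_blinfun_componentwiseI1)
  have inj: "inj (blinfun_apply (F' x0))"
    using inj_Pair_if_det_nonzero[OF lin[OF x0] det[unfolded jac_det_def]] F'[OF x0] by simp
  show ?thesis
    by (rule inverse_function_theorem_inj[OF U _ cont x0 inj that]) (rule der)
qed

lemma homeomorphism_level_set_section:
  fixes P Q :: "'a::topological_space \<Rightarrow> real"
  assumes hom: "homeomorphism U V (\<lambda>z. (P z, Q z)) g"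
    and "open U" "open V" "x \<in> U" "U \<subseteq> S"
  shows "\<exists>e>0. \<exists>h W. continuous_section_on (ball (Q x) e) Q {z \<in> S. P z = P x} h \<and>
           open W \<and> x \<in> W \<and> W \<inter> {z \<in> S. P z = P x} \<subseteq> h ` ball (Q x) e"
proof -
  let ?F = "\<lambda>z. (P z, Q z)"
  have "?F x \<in> V"
    using hom \<open>x \<in> U\<close> unfolding homeomorphism_def by blast
  then obtain e where "e > 0" and e: "ball (?F x) e \<subseteq> V"
    using \<open>open V\<close> open_contains_ball by blast
  define h where "h t = g (P x, t)" for t
  have inV: "(P x, t) \<in> V" if "t \<in> ball (Q x) e" for t
    using that e by (auto simp: dist_Pair_Pair)
  have "continuous_section_on (ball (Q x) e) Q {z \<in> S. P z = P x} h"
    unfolding continuous_section_on_def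
  proof (intro conjI ballI)
    show "continuous_on (ball (Q x) e) h"
      unfolding h_def
      by (rule continuous_on_compose2[OF homeomorphism_cont2[OF hom]])
         (auto intro!: continuous_intros inV)
    fix t assume "t \<in> ball (Q x) e"
    then have "(P x, t) \<in> V"
      by (rule inV)
    then have "h t \<in> U" "P (h t) = P x" "Q (h t) = t"
      using homeomorphism_image2[OF hom] homeomorphism_apply2[OF hom] unfolding h_def by auto
    then show "h t \<in> {z \<in> S. P z = P x}" "Q (h t) = t"
      using \<open>U \<subseteq> S\<close> by auto
  qed
  moreover define W where "W = U \<inter> ?F -` ball (?F x) e"
  have "open W"
    unfolding W_def using homeomorphism_cont1[OF hom] \<open>open U\<close>
    by (rule continuous_open_preimage) simp
  moreover have "x \<in> W"
    using \<open>x \<in> U\<close> \<open>e > 0\<close> by (simp add: W_def)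
  moreover have "W \<inter> {z \<in> S. P z = P x} \<subseteq> h ` ball (Q x) e"
  proof
    fix y assume y: "y \<in> W \<inter> {z \<in> S. P z = P x}"
    then have "h (Q y) = y"
      using homeomorphism_apply1[OF hom, of y] unfolding W_def h_def by auto
    moreover have "Q y \<in> ball (Q x) e"
      using y by (auto simp: W_def dist_Pair_Pair)
    ultimately show "y \<in> h ` ball (Q x) e"
      by (metis imageI)
  qed
  ultimately show ?thesis
    using \<open>e > 0\<close> by blast
qed

lemma inj_on_Pair_if_connected_level_sets:
  fixes P Q :: "real \<times> real \<Rightarrow> real"
  assumes S: "open S" and P: "C1_on S P P'" and Q: "C1_on S Q Q'"
    and det: "\<forall>z\<in>S. jac_det P' Q' z \<noteq> 0"
    and levels: "\<And>c. connected {z \<in> S. P z = c}"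
  shows "inj_on (\<lambda>z. (P z, Q z)) S"
proof (rule inj_onI)
  fix x y assume "x \<in> S" "y \<in> S" and Fxy: "(P x, Q x) = (P y, Q y)"
  let ?L = "{z \<in> S. P z = P x}"
  have "inj_on Q ?L"
  proof (rule inj_on_if_local_sections)
    fix z assume z: "z \<in> ?L"
    then have "z \<in> S" "jac_det P' Q' z \<noteq> 0"
      using det by auto
    then obtain U V g where "open U" "U \<subseteq> S" "z \<in> U" "open V" "(P z, Q z) \<in> V"
      "homeomorphism U V (\<lambda>z. (P z, Q z)) g"
      by (rule C1_on_Pair_local_homeomorphism[OF S P Q])
    then show "\<exists>e>0. \<exists>h W. continuous_section_on (ball (Q z) e) Q ?L h \<and>
                 open W \<and> z \<in> W \<and> W \<inter> ?L \<subseteq> h ` ball (Q z) e"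
      using homeomorphism_level_set_section[of U V P Q g z S] z by simp
  qed (rule levels)
  then show "x = y"
    using \<open>x \<in> S\<close> \<open>y \<in> S\<close> Fxy by (auto dest: inj_onD)
qed

theorem lemma1:
  fixes I :: "real set"
    and P Q :: "real \<times> real \<Rightarrow> real"
    and P' Q' :: "real \<times> real \<Rightarrow> real \<times> real \<Rightarrow> real"
  assumes I_interval: "is_interval I" and I_open: "open I" and I_ne: "I \<noteq> {}"
    and P_C1: "C1_on (strip I) P P'"
    and Q_C1: "C1_on (strip I) Q Q'"
    and nonsing: "\<forall>z\<in>strip I. jac_det P' Q' z \<noteq> 0"
    and levels: "(\<forall>c. connected {z \<in> strip I. P z = c}) \<or>
                 (\<forall>c. connected {z \<in> strip I. Q z = c})"
  shows "inj_on (\<lambda>z. (P z, Q z)) (strip I)"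
proof -
  have S: "open (strip I)"
    unfolding strip_def using I_open by (intro open_Times) auto
  from levels show ?thesis
  proof
    assume "\<forall>c. connected {z \<in> strip I. P z = c}"
    then show ?thesis
      using inj_on_Pair_if_connected_level_sets[OF S P_C1 Q_C1 nonsing] by blast
  next
    assume "\<forall>c. connected {z \<in> strip I. Q z = c}"
    moreover have "\<forall>z\<in>strip I. jac_det Q' P' z \<noteq> 0"
      using nonsing unfolding jac_det_def by (auto simp: algebra_simps)
    ultimately have "inj_on (\<lambda>z. (Q z, P z)) (strip I)"
      using inj_on_Pair_if_connected_level_sets[OF S Q_C1 P_C1] by blast
    then show ?thesis
      unfolding inj_on_def by auto
  qed
qed

end
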